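(* Let $1\le\ell\le k-2$ be integers with $k-\ell$ not dividing $k$. Then $\delta_{k-1}^{\mathrm{frct}}(k,\ell)\le\lambda(k,\ell)$.
   Context: A $k$-graph $G$ has vertex set $V(G)$ and edges that are $k$-subsets. A ($k$-uniform) $\ell$-cycle is a $k$-graph whose vertices can be cyclically ordered so that every edge consists of $k$ cyclically consecutive vertices and consecutive edges intersect in exactly $\ell$ vertices. For $1\le d<k$, $\delta_d(G)$ is the largest $m$ such that every $d$-set lies in at least $m$ edges. A homomorphism $F\to G$ is a vertex map sending edges to edges; a perfect fractional $\ell$-cycle tiling of $G$ is a weighting $\omega(\phi)\in[0,1]$ of homomorphisms $\phi$ from $k$-uniform $\ell$-cycles into $G$ (finitely many nonzero) with $\sum_\phi\omega(\phi)|\phi^{-1}(v)|=1$ for all $v\in V(G)$. The threshold $\delta_d^{\mathrm{frct}}(k,\ell)$ is the infimum of $\delta\in[0,1]$ such that for every $\varepsilon>0$ there is $n_0$ such that every $k$-graph on $n\ge n_0$ vertices with $\delta_d(G)\ge(\delta+\varepsilon)\binom{n-d}{k-d}$ has a perfect fractional $\ell$-cycle tiling. Also $\lambda(k,\ell)=\dfrac{1}{\lceil k/(k-\ell)\rceil(k-\ell)}$. *)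

theory Defs
  imports Complex_Main "HOL-Library.FuncSet"
begin

definition kgraph :: "nat \<Rightarrow> 'a set \<Rightarrow> 'a set set \<Rightarrow> bool" where
  "kgraph k V E \<longleftrightarrow> finite V \<and> (\<forall>e\<in>E. e \<subseteq> V \<and> card e = k)"

definition min_deg :: "nat \<Rightarrow> 'a set \<Rightarrow> 'a set set \<Rightarrow> nat" where
  "min_deg d V E = Min {card {e\<in>E. S \<subseteq> e} | S. S \<subseteq> V \<and> card S = d}"

text \<open>The k-uniform l-cycle with t edges: vertex set {0..<t(k-l)} in cyclic order,
  the i-th edge consists of the k cyclically consecutive vertices starting at i(k-l).\<close>
definition cyc_nverts :: "nat \<Rightarrow> nat \<Rightarrow> nat \<Rightarrow> nat" where
  "cyc_nverts k l t = t * (k - l)"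

definition cyc_edge :: "nat \<Rightarrow> nat \<Rightarrow> nat \<Rightarrow> nat \<Rightarrow> nat set" where
  "cyc_edge k l t i = {(i * (k - l) + j) mod cyc_nverts k l t | j. j < k}"

definition cyc_edges :: "nat \<Rightarrow> nat \<Rightarrow> nat \<Rightarrow> nat set set" where
  "cyc_edges k l t = cyc_edge k l t ` {..<t}"

definition is_cycle :: "nat \<Rightarrow> nat \<Rightarrow> nat \<Rightarrow> bool" where
  "is_cycle k l t \<longleftrightarrow> t \<ge> 1 \<and>
     (\<forall>i<t. card (cyc_edge k l t i) = k \<and>
            card (cyc_edge k l t i \<inter> cyc_edge k l t ((i + 1) mod t)) = l)"

definition cyc_hom :: "nat \<Rightarrow> nat \<Rightarrow> nat \<Rightarrow> 'a set \<Rightarrow> 'a set set \<Rightarrow> (nat \<Rightarrow> 'a) \<Rightarrow> bool" where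
  "cyc_hom k l t V E \<phi> \<longleftrightarrow> is_cycle k l t \<and> \<phi> \<in> {..<cyc_nverts k l t} \<rightarrow>\<^sub>E V \<and>
     (\<forall>e\<in>cyc_edges k l t. \<phi> ` e \<in> E)"

definition perfect_frac_cycle_tiling :: "nat \<Rightarrow> nat \<Rightarrow> 'a set \<Rightarrow> 'a set set \<Rightarrow> bool" where
  "perfect_frac_cycle_tiling k l V E \<longleftrightarrow>
     (\<exists>H :: (nat \<times> (nat \<Rightarrow> 'a)) set. \<exists>\<omega> :: nat \<times> (nat \<Rightarrow> 'a) \<Rightarrow> real.
        finite H \<and> (\<forall>(t, \<phi>)\<in>H. cyc_hom k l t V E \<phi>) \<and>
        (\<forall>h\<in>H. 0 \<le> \<omega> h \<and> \<omega> h \<le> 1) \<and>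
        (\<forall>v\<in>V. (\<Sum>(t, \<phi>)\<in>H. \<omega> (t, \<phi>) * real (card {x\<in>{..<cyc_nverts k l t}. \<phi> x = v})) = 1))"

definition frct_threshold :: "nat \<Rightarrow> nat \<Rightarrow> nat \<Rightarrow> real" where
  "frct_threshold d k l = Inf {\<delta>. 0 \<le> \<delta> \<and> \<delta> \<le> 1 \<and>
     (\<forall>\<epsilon>>0. \<exists>n0. \<forall>n\<ge>n0. \<forall>E :: nat set set.
        kgraph k {..<n} E \<and>
        real (min_deg d {..<n} E) \<ge> (\<delta> + \<epsilon>) * real ((n - d) choose (k - d))
        \<longrightarrow> perfect_frac_cycle_tiling k l {..<n} E)}"

definition lambda_kl :: "nat \<Rightarrow> nat \<Rightarrow> real" where
  "lambda_kl k l = 1 / (real_of_int \<lceil>real k / real (k - l)\<rceil> * real (k - l))"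

end

theory Submission
  imports Defs
begin

text \<open>
  Fix \<open>m = k - l\<close> and \<open>a = \<lceil>k / m\<rceil>\<close>; since \<open>m\<close> does not divide \<open>k\<close>, the period \<open>K = a m\<close>
  satisfies \<open>(a - 1) m < k < K\<close>, so every edge of an \<open>l\<close>-cycle (a window of \<open>k\<close> consecutive
  vertices starting at a multiple of \<open>m\<close>) contains exactly one multiple of \<open>K\<close>.  Hence a cycle with
  \<open>K (k - 1)\<close> vertices can be wrapped around any single edge \<open>S \<union> {u}\<close>: the multiples of \<open>K\<close>
  go to \<open>u\<close> and the other vertices run cyclically through \<open>S\<close>.

  By LP duality (Farkas' lemma) a perfect fractional tiling fails to exist only if some weighting
  \<open>y\<close> of the vertices is nonnegative on every homomorphic cycle but has negative total weight.
  Let \<open>T\<close> be the \<open>\<lfloor>n / K\<rfloor> + 1\<close> heaviest vertices and \<open>S\<close> the \<open>k - 1\<close> lightest remaining ones.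
  As the codegree of \<open>S\<close> exceeds \<open>|T|\<close>, some edge \<open>S \<union> {u}\<close> avoids \<open>T\<close>; averaging the
  wrapped cycles over all rotations gives \<open>(k - 1) y(u) + (K - 1) y(S) \<ge> 0\<close>, and comparing the
  three layers \<open>T\<close>, \<open>S\<close> and the rest shows that the total weight is nonnegative after all.
\<close>

section \<open>Farkas' lemma\<close>

definition dot_on :: "'a set \<Rightarrow> ('a \<Rightarrow> real) \<Rightarrow> ('a \<Rightarrow> real) \<Rightarrow> real" where
  "dot_on V y b = (\<Sum>v\<in>V. y v * b v)"

definition in_cone :: "'a set \<Rightarrow> 'i set \<Rightarrow> ('i \<Rightarrow> 'a \<Rightarrow> real) \<Rightarrow> ('a \<Rightarrow> real) \<Rightarrow> bool" where
  "in_cone V I A b \<longleftrightarrow> (\<exists>c. (\<forall>i\<in>I. 0 \<le> c i) \<and> (\<forall>v\<in>V. b v = (\<Sum>i\<in>I. c i * A i v)))"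

definition farkas_certificate ::
    "'a set \<Rightarrow> 'i set \<Rightarrow> ('i \<Rightarrow> 'a \<Rightarrow> real) \<Rightarrow> ('a \<Rightarrow> real) \<Rightarrow> ('a \<Rightarrow> real) \<Rightarrow> bool" where
  "farkas_certificate V I A b y \<longleftrightarrow> (\<forall>i\<in>I. 0 \<le> dot_on V y (A i)) \<and> dot_on V y b < 0"

lemma dot_on_diff_left: "dot_on V (\<lambda>v. z v - \<mu> * y v) b = dot_on V z b - \<mu> * dot_on V y b"
  unfolding dot_on_def by (simp add: algebra_simps sum_subtractf sum_distrib_left)

lemma dot_on_diff_right: "dot_on V y (\<lambda>v. b v - \<mu> * b' v) = dot_on V y b - \<mu> * dot_on V y b'"
  unfolding dot_on_def by (simp add: algebra_simps sum_subtractf sum_distrib_left)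

lemma in_cone_mono:
  assumes "in_cone V I A b" "I \<subseteq> J" "finite J"
  shows "in_cone V J A b"
proof -
  obtain c where c: "\<forall>i\<in>I. 0 \<le> c i" "\<forall>v\<in>V. b v = (\<Sum>i\<in>I. c i * A i v)"
    using assms(1) unfolding in_cone_def by blast
  define c' where "c' i = (if i \<in> I then c i else 0)" for i
  have "(\<Sum>i\<in>J. c' i * A i v) = (\<Sum>i\<in>I. c i * A i v)" for v
    using assms(2,3) by (intro sum.mono_neutral_cong_right) (auto simp: c'_def)
  then show ?thesis
    unfolding in_cone_def using c by (intro exI[of _ c']) (auto simp: c'_def)
qed

text \<open>Projecting all vectors along \<open>A j\<close> onto the hyperplane \<open>y \<bullet> x = 0\<close> removes \<open>A j\<close>
  from the system; solutions and certificates of the projected system lift back.\<close>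

lemma in_cone_unproject:
  fixes A :: "'i \<Rightarrow> 'a \<Rightarrow> real" and V y j
  defines "d \<equiv> dot_on V y (A j)"
  assumes "finite I" "j \<notin> I" "farkas_certificate V I A b y" "d < 0"
    and "in_cone V I (\<lambda>i v. A i v - dot_on V y (A i) / d * A j v) (\<lambda>v. b v - dot_on V y b / d * A j v)"
  shows "in_cone V (insert j I) A b"
proof -
  obtain c where c: "\<forall>i\<in>I. 0 \<le> c i"
    and b: "\<forall>v\<in>V. b v - dot_on V y b / d * A j v = (\<Sum>i\<in>I. c i * (A i v - dot_on V y (A i) / d * A j v))"
    using assms(6) unfolding in_cone_def by blast
  define cj where "cj = (dot_on V y b - (\<Sum>i\<in>I. c i * dot_on V y (A i))) / d"
  have "0 \<le> (\<Sum>i\<in>I. c i * dot_on V y (A i))"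
    using c assms(4) unfolding farkas_certificate_def by (intro sum_nonneg) auto
  then have "0 \<le> cj"
    using assms(4,5) unfolding cj_def farkas_certificate_def by (intro divide_nonpos_neg) auto
  moreover have "b v = (\<Sum>i\<in>insert j I. (c(j := cj)) i * A i v)" if "v \<in> V" for v
  proof -
    have "(\<Sum>i\<in>insert j I. (c(j := cj)) i * A i v) = cj * A j v + (\<Sum>i\<in>I. c i * A i v)"
      using assms(2,3) by (auto intro!: sum.cong)
    moreover have "(\<Sum>i\<in>I. c i * (A i v - dot_on V y (A i) / d * A j v))
        = (\<Sum>i\<in>I. c i * A i v) - (\<Sum>i\<in>I. c i * dot_on V y (A i)) / d * A j v"
      by (simp add: algebra_simps sum_subtractf sum_distrib_left sum_distrib_right sum_divide_distrib)
    moreover have "cj * A j v = dot_on V y b / d * A j v - (\<Sum>i\<in>I. c i * dot_on V y (A i)) / d * A j v"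
      unfolding cj_def by (simp add: diff_divide_distrib algebra_simps)
    ultimately show ?thesis
      using bspec[OF b that] by linarith
  qed
  ultimately show ?thesis
    unfolding in_cone_def using c by (intro exI[of _ "c(j := cj)"]) auto
qed

lemma certificate_unproject:
  fixes A :: "'i \<Rightarrow> 'a \<Rightarrow> real" and V y j
  defines "d \<equiv> dot_on V y (A j)"
  assumes "d < 0"
    and "farkas_certificate V I (\<lambda>i v. A i v - dot_on V y (A i) / d * A j v)
           (\<lambda>v. b v - dot_on V y b / d * A j v) z"
  shows "farkas_certificate V (insert j I) A b (\<lambda>v. z v - dot_on V z (A j) / d * y v)"
  using assms unfolding farkas_certificate_def dot_on_diff_left dot_on_diff_right
  by (auto simp: field_simps)

lemma farkas_lemma:
  assumes "finite V" "finite I"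
  shows "in_cone V I A b \<or> (\<exists>y. farkas_certificate V I A b y)"
  using assms(2)
proof (induction I arbitrary: A b rule: finite_induct)
  case empty
  show ?case
  proof (cases "\<forall>v\<in>V. b v = 0")
    case True
    then show ?thesis by (auto simp: in_cone_def)
  next
    case False
    then obtain v0 where "v0 \<in> V" "b v0 \<noteq> 0" by auto
    then have "0 < (\<Sum>v\<in>V. b v * b v)"
      using assms(1) by (intro sum_pos2) (auto simp: zero_less_mult_iff linorder_neq_iff)
    then have "farkas_certificate V {} A b (\<lambda>v. - b v)"
      by (simp add: farkas_certificate_def dot_on_def sum_negf)
    then show ?thesis by blast
  qed
next
  case (insert j I)
  from insert.IH[of A b] show ?case
  proof
    assume "in_cone V I A b"
    then show ?thesis using insert.hyps by (blast intro: in_cone_mono)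
  next
    assume "\<exists>y. farkas_certificate V I A b y"
    then obtain y where y: "farkas_certificate V I A b y" ..
    show ?thesis
    proof (cases "0 \<le> dot_on V y (A j)")
      case True
      then have "farkas_certificate V (insert j I) A b y"
        using y by (simp add: farkas_certificate_def)
      then show ?thesis by blast
    next
      case False
      then have d: "dot_on V y (A j) < 0" by simp
      from insert.IH show ?thesis
        using in_cone_unproject[OF insert.hyps y d]
          certificate_unproject[where V = V and y = y and A = A and j = j, OF d] by blast
    qed
  qed
qed

lemma mod_neq_if_close:
  fixes x y n :: nat
  assumes "x < y" "y < x + n"
  shows "x mod n \<noteq> y mod n"
proof
  assume "x mod n = y mod n"
  then have "n dvd y - x" using mod_eq_dvd_iff_nat[of x y n] assms(1) by auto
  then show False using assms by (auto dest: dvd_imp_le)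
qed

lemma inj_on_add_mod: "inj_on (\<lambda>j. (A + j) mod N) {..<N}" for A N :: nat
  by (rule linorder_inj_onI', rule mod_neq_if_close) auto

lemma mod_mult_add_mod: "((x mod t) * m + j) mod (t * m) = (x * m + j) mod (t * m)" for x t m j :: nat
proof -
  have "(x * m + j) mod (t * m) = ((x * m) mod (t * m) + j) mod (t * m)"
    by (rule mod_add_left_eq[symmetric])
  also have "\<dots> = ((x mod t) * m + j) mod (t * m)"
    by (simp only: mod_mult_mult2)
  finally show ?thesis by simp
qed

lemma image_lessThan_shift: "(\<lambda>j. f (A + j)) ` {..<k} = f ` {A..<A + k}" for A k :: nat
proof -
  have "{A..<A + k} = (\<lambda>j. A + j) ` {..<k}"
    by (simp add: lessThan_atLeast0 add.commute)
  then show ?thesis by (simp add: image_image)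
qed

lemma sum_lessThan_add_mod: "(\<Sum>s<n. f ((b + s) mod n)) = (\<Sum>s<n. f s)" for b n :: nat
proof (cases "n = 0")
  case False
  have "(\<lambda>s. (b + s) mod n) ` {..<n} = {..<n}"
    using False by (intro endo_inj_surj inj_on_add_mod) auto
  then have "bij_betw (\<lambda>s. (b + s) mod n) {..<n} {..<n}"
    by (simp add: bij_betw_def inj_on_add_mod)
  then show ?thesis by (rule sum.reindex_bij_betw)
qed simp

lemma card_multiples_lessThan: "0 < K \<Longrightarrow> card {x\<in>{..<K * n}. K dvd x} = n" for K n :: nat
proof -
  assume "0 < K"
  then have "{x\<in>{..<K * n}. K dvd x} = (\<lambda>c. K * c) ` {..<n}" by auto
  moreover have "inj_on (\<lambda>c. K * c) {..<n}" using \<open>0 < K\<close> by (auto simp: inj_on_def)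
  ultimately show ?thesis by (simp add: card_image)
qed

lemma sum_fibres:
  fixes y :: "'a \<Rightarrow> real"
  assumes "finite V" "finite X" "\<phi> ` X \<subseteq> V"
  shows "(\<Sum>v\<in>V. y v * real (card {x\<in>X. \<phi> x = v})) = (\<Sum>x\<in>X. y (\<phi> x))"
proof -
  have "(\<Sum>x\<in>X. y (\<phi> x)) = (\<Sum>v\<in>V. \<Sum>x\<in>{x\<in>X. \<phi> x = v}. y (\<phi> x))"
    using sum.group[OF assms(2,1,3), of "\<lambda>x. y (\<phi> x)"] by simp
  also have "\<dots> = (\<Sum>v\<in>V. \<Sum>x\<in>{x\<in>X. \<phi> x = v}. y v)"
    by (intro sum.cong) auto
  finally show ?thesis by (simp add: mult.commute)
qed

lemma exists_top_subset:
  fixes f :: "'a \<Rightarrow> 'b::linordered_ab_group_add"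
  assumes "finite X" "j \<le> card X"
  obtains T where "T \<subseteq> X" "card T = j" "\<And>x z. x \<in> T \<Longrightarrow> z \<in> X - T \<Longrightarrow> f z \<le> f x"
proof -
  define F where "F = {T. T \<subseteq> X \<and> card T = j}"
  have "finite F" unfolding F_def using assms(1) by simp
  moreover have "F \<noteq> {}"
    using obtain_subset_with_card_n[OF assms(2)] unfolding F_def by blast
  ultimately have "Max (sum f ` F) \<in> sum f ` F" by (intro Max_in) auto
  then obtain T where T: "T \<in> F" "sum f T = Max (sum f ` F)" by auto
  have max: "sum f T' \<le> sum f T" if "T' \<in> F" for T'
    unfolding T(2) using \<open>finite F\<close> that by (intro Max_ge) auto
  have "f z \<le> f x" if x: "x \<in> T" and z: "z \<in> X - T" for x z
  proof -
    have "finite T" using T(1) assms(1) unfolding F_def by (auto intro: finite_subset)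
    moreover have "0 < card T" using \<open>finite T\<close> x by (auto simp: card_gt_0_iff)
    ultimately have "insert z (T - {x}) \<in> F" and "sum f (insert z (T - {x})) = f z + (sum f T - f x)"
      using T(1) x z unfolding F_def by (auto simp: card_insert_if sum_diff1)
    then show ?thesis using max by fastforce
  qed
  then show ?thesis using that T(1) unfolding F_def by blast
qed

lemma layered_sum_nonneg:
  fixes \<kappa> K \<tau> n ST SR \<sigma> Y :: real
  assumes "0 < \<kappa>" "0 \<le> \<tau>" "\<tau> \<le> n" "n \<le> K * \<tau>"
    and "\<tau> * Y \<le> ST" "(n - \<tau> - \<kappa>) * \<sigma> \<le> \<kappa> * SR" "\<sigma> \<le> \<kappa> * Y" "0 \<le> \<kappa> * Y + (K - 1) * \<sigma>"
  shows "0 \<le> ST + SR + \<sigma>"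
proof -
  have "\<kappa> * (\<tau> * Y) \<le> \<kappa> * ST" using assms(1,5) by (intro mult_left_mono) auto
  then have "\<kappa> * \<tau> * Y + (n - \<tau>) * \<sigma> \<le> \<kappa> * (ST + SR + \<sigma>)"
    using assms(6) by (simp add: algebra_simps)
  moreover have "0 \<le> \<kappa> * \<tau> * Y + (n - \<tau>) * \<sigma>"
  proof (cases "0 \<le> \<sigma>")
    case True
    have "0 \<le> Y"
    proof (rule ccontr)
      assume "\<not> 0 \<le> Y"
      then have "\<kappa> * Y < 0" using assms(1) by (simp add: mult_pos_neg)
      then show False using True assms(7) by linarith
    qed
    then show ?thesis using True assms(1-3) by simp
  next
    case False
    have "(K - 1) * \<tau> * \<sigma> \<le> (n - \<tau>) * \<sigma>"
      using False assms(4) by (intro mult_right_mono_neg) (simp_all add: algebra_simps)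
    moreover have "- ((K - 1) * \<sigma>) * \<tau> \<le> \<kappa> * Y * \<tau>"
      using assms(2,8) by (intro mult_right_mono) auto
    ultimately show ?thesis by (simp add: algebra_simps)
  qed
  ultimately have "0 \<le> \<kappa> * (ST + SR + \<sigma>)" by linarith
  then show ?thesis using assms(1) by (auto simp: zero_le_mult_iff)
qed

lemma ceiling_of_nat_divide:
  fixes k m :: nat
  assumes "0 < m" "\<not> m dvd k"
  shows "\<lceil>real k / real m\<rceil> = int (k div m) + 1"
proof -
  have "0 < k mod m" "k mod m < m" using assms by (auto simp: dvd_eq_mod_eq_0 intro: mod_less_divisor)
  moreover have "real k = real (k div m) * real m + real (k mod m)"
    by (simp flip: of_nat_mult of_nat_add)
  ultimately show ?thesis
    by (intro ceiling_unique) (auto simp: field_simps)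
qed

lemma div_add_one_less_scaled:
  fixes n K k :: nat and \<epsilon> :: real
  assumes "0 < \<epsilon>" "k < K" "nat \<lceil>2 / \<epsilon>\<rceil> + 2 * k \<le> n"
  shows "real (n div K + 1) < (1 / real K + \<epsilon>) * real (n - (k - 1))"
proof -
  have "real (n div K + 1) \<le> real n / real K + 1"
    using of_nat_div_le_of_nat[of n K] by simp
  also have "\<dots> < real (n - (k - 1)) / real K + 2"
  proof -
    have "real (k - 1) / real K < 1" using assms(2) by simp
    moreover have "real (n - (k - 1)) = real n - real (k - 1)" using assms(3) by simp
    ultimately show ?thesis by (simp add: diff_divide_distrib)
  qed
  also have "\<dots> \<le> (1 / real K + \<epsilon>) * real (n - (k - 1))"
  proof -
    have "nat \<lceil>2 / \<epsilon>\<rceil> \<le> n - (k - 1)" using assms(3) by linarith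
    then have "2 / \<epsilon> \<le> real (n - (k - 1))"
      using real_nat_ceiling_ge[of "2 / \<epsilon>"] of_nat_le_iff order_trans by blast
    then have "2 \<le> real (n - (k - 1)) * \<epsilon>" using pos_divide_le_eq[OF assms(1)] by blast
    moreover have "r / real K + 2 \<le> (1 / real K + \<epsilon>) * r" if "2 \<le> r * \<epsilon>" for r
      using that by (simp add: algebra_simps)
    ultimately show ?thesis by blast
  qed
  finally show ?thesis .
qed

section \<open>Cycles, homomorphisms and tilings\<close>

lemma cyc_edge_eq_image:
  "cyc_edge k l t i = (\<lambda>j. (i * (k - l) + j) mod cyc_nverts k l t) ` {..<k}"
  by (auto simp: cyc_edge_def)

lemma is_cycleI:
  assumes "l < k" "k + (k - l) \<le> t * (k - l)"
  shows "is_cycle k l t"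
proof -
  define m where "m = k - l"
  define N where "N = cyc_nverts k l t"
  have N: "N = t * m" by (simp add: N_def m_def cyc_nverts_def)
  have kN: "k + m \<le> N" using assms N m_def by simp
  have "card (cyc_edge k l t i) = k \<and> card (cyc_edge k l t i \<inter> cyc_edge k l t ((i + 1) mod t)) = l"
    for i
  proof -
    define F where "F = (\<lambda>j. (i * m + j) mod N)"
    have inj: "inj_on F {..<N}" unfolding F_def by (rule inj_on_add_mod)
    have E1: "cyc_edge k l t i = F ` {..<k}"
      unfolding cyc_edge_eq_image F_def N_def m_def ..
    have "cyc_edge k l t ((i + 1) mod t) = (\<lambda>j. (((i + 1) mod t) * m + j) mod N) ` {..<k}"
      unfolding cyc_edge_eq_image N_def m_def ..
    also have "\<dots> = (\<lambda>j. F (m + j)) ` {..<k}"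
    proof (rule image_cong[OF refl])
      show "((i + 1) mod t * m + j) mod N = F (m + j)" for j
        unfolding N F_def mod_mult_add_mod by (simp add: algebra_simps)
    qed
    also have "\<dots> = F ` {m..<m + k}"
      by (rule image_lessThan_shift)
    finally have E2: "cyc_edge k l t ((i + 1) mod t) = F ` {m..<m + k}" .
    have "card (cyc_edge k l t i) = k"
      unfolding E1 using kN by (subst card_image) (auto intro: inj_on_subset[OF inj])
    moreover have "cyc_edge k l t i \<inter> cyc_edge k l t ((i + 1) mod t) = F ` ({..<k} \<inter> {m..<m + k})"
      unfolding E1 E2 using kN by (intro inj_on_image_Int[OF inj, symmetric]) auto
    moreover have "{..<k} \<inter> {m..<m + k} = {m..<k}" by auto
    moreover have "inj_on F {m..<k}" by (rule inj_on_subset[OF inj]) (use kN in auto)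
    ultimately show ?thesis using assms m_def by (simp add: card_image)
  qed
  moreover have "1 \<le> t" using assms by (cases t) auto
  ultimately show ?thesis unfolding is_cycle_def by blast
qed

lemma finite_cyc_homs: "finite V \<Longrightarrow> finite {\<phi>. cyc_hom k l t V E \<phi>}"
  by (rule finite_subset[of _ "{..<cyc_nverts k l t} \<rightarrow>\<^sub>E V"])
     (auto simp: cyc_hom_def intro: finite_PiE)

lemma perfect_frac_cycle_tilingI:
  fixes k l t :: nat and V :: "'a set" and E
  defines "H \<equiv> {\<phi>. cyc_hom k l t V E \<phi>}"
  assumes "finite V" "0 < cyc_nverts k l t"
    and "in_cone V H (\<lambda>\<phi> v. real (card {x\<in>{..<cyc_nverts k l t}. \<phi> x = v})) (\<lambda>_. 1)"
  shows "perfect_frac_cycle_tiling k l V E"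
proof -
  let ?A = "\<lambda>\<phi> v. real (card {x\<in>{..<cyc_nverts k l t}. \<phi> x = v})"
  obtain c where c: "\<forall>\<phi>\<in>H. 0 \<le> c \<phi>" "\<forall>v\<in>V. 1 = (\<Sum>\<phi>\<in>H. c \<phi> * ?A \<phi> v)"
    using assms(4) unfolding in_cone_def by blast
  have "finite H" unfolding H_def using assms(2) by (rule finite_cyc_homs)
  have "c \<phi> \<le> 1" if "\<phi> \<in> H" for \<phi>
  proof -
    have v0: "\<phi> 0 \<in> V" using that assms(3) by (auto simp: H_def cyc_hom_def)
    have "1 \<le> ?A \<phi> (\<phi> 0)" using assms(3) by (auto simp: Suc_le_eq card_gt_0_iff)
    then have "c \<phi> \<le> c \<phi> * ?A \<phi> (\<phi> 0)"
      using mult_left_mono[of 1 _ "c \<phi>"] c that by simp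
    also have "\<dots> \<le> (\<Sum>\<psi>\<in>H. c \<psi> * ?A \<psi> (\<phi> 0))"
      by (rule member_le_sum) (use that c \<open>finite H\<close> in auto)
    finally show ?thesis using c v0 by simp
  qed
  moreover have "(\<Sum>(t', \<phi>)\<in>(\<lambda>\<phi>. (t, \<phi>)) ` H. c \<phi> * real (card {x\<in>{..<cyc_nverts k l t'}. \<phi> x = v}))
      = (\<Sum>\<phi>\<in>H. c \<phi> * ?A \<phi> v)" for v
    by (subst sum.reindex) (auto simp: inj_on_def)
  ultimately show ?thesis
    unfolding perfect_frac_cycle_tiling_def using c \<open>finite H\<close>
    by (intro exI[of _ "(\<lambda>\<phi>. (t, \<phi>)) ` H"] exI[of _ "\<lambda>(t', \<phi>). c \<phi>"]) (auto simp: H_def)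
qed

lemma min_deg_le_codegree:
  assumes "finite V" "S \<subseteq> V" "card S = d"
  shows "min_deg d V E \<le> card {e\<in>E. S \<subseteq> e}"
proof -
  have "{card {e\<in>E. S \<subseteq> e} |S. S \<subseteq> V \<and> card S = d} \<subseteq> (\<lambda>S. card {e\<in>E. S \<subseteq> e}) ` Pow V"
    by auto
  then have "finite {card {e\<in>E. S \<subseteq> e} |S. S \<subseteq> V \<and> card S = d}"
    using assms(1) by (auto intro: finite_subset)
  then show ?thesis
    unfolding min_deg_def using assms(2,3) by (intro Min_le) auto
qed

lemma exists_edge_extending:
  assumes "kgraph k V E" "0 < k" "card S = k - 1" "finite T" "card T < card {e\<in>E. S \<subseteq> e}"
  obtains u where "u \<notin> S" "u \<notin> T" "insert u S \<in> E"
proof (rule ccontr)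
  assume no_u: "\<not> thesis"
  have "{e\<in>E. S \<subseteq> e} \<subseteq> (\<lambda>u. insert u S) ` T"
  proof
    fix e assume e: "e \<in> {e\<in>E. S \<subseteq> e}"
    then have "finite e" "card e = k" using assms(1) unfolding kgraph_def by (auto intro: finite_subset)
    moreover have "finite S" using \<open>finite e\<close> e by (auto intro: finite_subset)
    ultimately have "\<not> e \<subseteq> S" using card_mono[of S e] assms(2,3) by auto
    then obtain u where u: "u \<in> e" "u \<notin> S" by auto
    have "insert u S = e"
      using e u \<open>finite e\<close> \<open>card e = k\<close> assms(2,3)
      by (intro card_subset_eq) (auto simp: card_insert_if finite_subset)
    moreover have "u \<in> T" using no_u that u e \<open>insert u S = e\<close> by auto
    ultimately show "e \<in> (\<lambda>u. insert u S) ` T" by auto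
  qed
  then have "card {e\<in>E. S \<subseteq> e} \<le> card T"
    using assms(4) by (meson card_image_le card_mono finite_imageI le_trans)
  then show False using assms(5) by simp
qed

lemma exists_ranked_edge:
  fixes y :: "'a \<Rightarrow> real"
  assumes kg: "kgraph k V E" and "0 < k" "\<tau> + (k - 1) \<le> card V"
    and codeg: "\<And>S. S \<subseteq> V \<Longrightarrow> card S = k - 1 \<Longrightarrow> \<tau> < card {e\<in>E. S \<subseteq> e}"
  obtains T S u where "T \<subseteq> V" "card T = \<tau>" "\<And>x z. x \<in> T \<Longrightarrow> z \<in> V - T \<Longrightarrow> y z \<le> y x"
    and "S \<subseteq> V - T" "card S = k - 1" "\<And>x z. x \<in> S \<Longrightarrow> z \<in> V - T - S \<Longrightarrow> y x \<le> y z"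
    and "u \<in> V - T - S" "insert u S \<in> E"
proof -
  have "finite V" using kg by (simp add: kgraph_def)
  obtain T where T: "T \<subseteq> V" "card T = \<tau>" and top: "\<And>x z. x \<in> T \<Longrightarrow> z \<in> V - T \<Longrightarrow> y z \<le> y x"
    using exists_top_subset[OF \<open>finite V\<close>, of \<tau> y] assms(3) by auto
  have "finite T" using T \<open>finite V\<close> by (auto intro: finite_subset)
  have "k - 1 \<le> card (V - T)" using T \<open>finite T\<close> assms(3) by (simp add: card_Diff_subset)
  then obtain S where S: "S \<subseteq> V - T" "card S = k - 1"
    and bottom: "\<And>x z. x \<in> S \<Longrightarrow> z \<in> V - T - S \<Longrightarrow> y x \<le> y z"
    using exists_top_subset[of "V - T" "k - 1" "\<lambda>v. - y v"] \<open>finite V\<close> by auto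
  obtain u where u: "u \<notin> S" "u \<notin> T" "insert u S \<in> E"
    using exists_edge_extending[OF kg assms(2) S(2) \<open>finite T\<close>] codeg[of S] S T by auto
  moreover have "u \<in> V" using kg u(3) unfolding kgraph_def by blast
  ultimately show ?thesis using that T top S bottom by blast
qed

lemma frct_threshold_le:
  assumes "0 \<le> \<delta>" "\<delta> \<le> 1"
    and "\<And>\<epsilon>. 0 < \<epsilon> \<Longrightarrow> \<exists>n0. \<forall>n\<ge>n0. \<forall>E :: nat set set.
          kgraph k {..<n} E \<and> real (min_deg d {..<n} E) \<ge> (\<delta> + \<epsilon>) * real ((n - d) choose (k - d))
          \<longrightarrow> perfect_frac_cycle_tiling k l {..<n} E"
  shows "frct_threshold d k l \<le> \<delta>"
  unfolding frct_threshold_def using assms by (intro cInf_lower bdd_belowI[of _ 0]) auto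

section \<open>Wrapping a cycle around an edge\<close>

text \<open>Cycle vertices divisible by \<open>K\<close> go to \<open>u\<close>; the others, numbered consecutively by
  \<open>z - z div K\<close>, run cyclically through \<open>g\<close>, rotated by \<open>s\<close>.\<close>

definition wrap_map :: "nat \<Rightarrow> nat \<Rightarrow> 'a \<Rightarrow> (nat \<Rightarrow> 'a) \<Rightarrow> nat \<Rightarrow> nat \<Rightarrow> 'a" where
  "wrap_map K n u g s z = (if K dvd z then u else g ((z - z div K + s) mod n))"

lemma wrap_map_mod:
  assumes "0 < K"
  shows "wrap_map K n u g s (z mod (K * n)) = wrap_map K n u g s z"
proof -
  define q r where "q = z div (K * n)" and "r = z mod (K * n)"
  have z: "z = K * (q * n) + r"
    using div_mult_mod_eq[of z "K * n"] unfolding q_def r_def by (simp only: mult_ac)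
  have "z div K = q * n + r div K" unfolding z using assms by simp
  moreover have "(K - 1) * q * n = K * (q * n) - q * n" by (simp add: diff_mult_distrib)
  moreover have "r div K \<le> r" "q * n \<le> K * (q * n)" using assms by simp_all
  ultimately have "z - z div K + s = (r - r div K + s) + (K - 1) * q * n"
    using z by linarith
  moreover have "K dvd z \<longleftrightarrow> K dvd r" unfolding z by (simp add: dvd_add_right_iff)
  ultimately show ?thesis unfolding wrap_map_def r_def by simp
qed

lemma sum_wrap_map_rotations:
  fixes y :: "'a \<Rightarrow> real"
  assumes "0 < K" "bij_betw g {..<n} S"
  shows "(\<Sum>s<n. \<Sum>x<K * n. y (wrap_map K n u g s x))
    = real n * (real n * y u + (real K - 1) * (\<Sum>v\<in>S. y v))"
proof -
  have inner: "(\<Sum>s<n. y (wrap_map K n u g s x)) = (if K dvd x then real n * y u else (\<Sum>v\<in>S. y v))"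
    for x
  proof -
    have "(\<Sum>s<n. y (g ((x - x div K + s) mod n))) = (\<Sum>s<n. y (g s))"
      by (rule sum_lessThan_add_mod)
    also have "\<dots> = (\<Sum>v\<in>S. y v)" using sum.reindex_bij_betw[OF assms(2)] by simp
    finally show ?thesis by (simp add: wrap_map_def)
  qed
  have card_mult: "card {x. x < K * n \<and> K dvd x} = n"
    using card_multiples_lessThan[OF assms(1), of n] by simp
  have "{x. x < K * n \<and> \<not> K dvd x} = {..<K * n} - {x\<in>{..<K * n}. K dvd x}" by auto
  then have card_non: "card {x. x < K * n \<and> \<not> K dvd x} = K * n - n"
    using card_Diff_subset[of "{x\<in>{..<K * n}. K dvd x}" "{..<K * n}"]
      card_multiples_lessThan[OF assms(1), of n] by auto
  have "(\<Sum>s<n. \<Sum>x<K * n. y (wrap_map K n u g s x))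
      = (\<Sum>x<K * n. if K dvd x then real n * y u else (\<Sum>v\<in>S. y v))"
    by (subst sum.swap) (simp add: inner)
  also have "\<dots> = real n * (real n * y u) + real (K * n - n) * (\<Sum>v\<in>S. y v)"
    by (simp add: sum.If_cases Int_def card_mult card_non)
  also have "real (K * n - n) = real n * (real K - 1)"
    using assms(1) by (simp add: algebra_simps)
  finally show ?thesis by (simp add: algebra_simps)
qed

lemma dvd_unique_in_window:
  fixes K k A z z' :: nat
  assumes "k \<le> K" "K dvd z" "K dvd z'" "z \<in> {A..<A + k}" "z' \<in> {A..<A + k}"
  shows "z = z'"
proof -
  have "K dvd max z z' - min z z'" using assms(2,3) by (simp add: max_def min_def)
  moreover have "max z z' - min z z' < K" using assms(1,4,5) by auto
  ultimately have "max z z' - min z z' = 0" using dvd_imp_le by fastforce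
  then show ?thesis by (simp add: max_def min_def split: if_splits)
qed

lemma wrap_index_gap:
  fixes K k A s0 z z' :: nat
  assumes "k < K" "K dvd s0" "s0 \<in> {A..<A + k}" "z \<in> {A..<A + k}" "z' \<in> {A..<A + k}"
    and "\<not> K dvd z" "\<not> K dvd z'" "z < z'"
  shows "z - z div K < z' - z' div K \<and> z' - z' div K < z - z div K + (k - 1)"
proof -
  define q q' where "q = z div K" and "q' = z' div K"
  obtain c where c: "s0 = K * c" using assms(2) by blast
  have K0: "0 < K" using assms(1) by simp
  have "K * q \<noteq> z" "K * q' \<noteq> z'"
    using assms(6,7) unfolding q_def q'_def by (metis dvd_triv_left)+
  then have bz: "K * q < z" "z < K * q + K" "K * q' < z'" "z' < K * q' + K"
    using dividend_less_times_div[OF K0, of z] dividend_less_times_div[OF K0, of z']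
    unfolding q_def q'_def by (auto simp: add.commute intro: order_le_neq_trans)
  have q: "q \<le> z" "q' \<le> z'" unfolding q_def q'_def by simp_all
  have "q \<le> q'" unfolding q_def q'_def using assms(8) by (simp add: div_le_mono)
  moreover have "K * q' < K * (q + 2)" "K * q < K * (c + 1)" "K * c < K * (q + 2)"
    using bz c assms(1,3-5) by (auto simp: algebra_simps)
  then have "q' \<le> q + 1" "q \<le> c" "c \<le> q + 1" by (simp_all only: mult_less_cancel1) auto
  ultimately consider "q' = q" "c = q" | "q' = q" "c = q + 1" | "q' = q + 1" "c = q" | "q' = q + 1" "c = q + 1"
    by linarith
  then show ?thesis
    using bz q c assms(3-5,8) unfolding q_def[symmetric] q'_def[symmetric]
    by cases (auto simp: algebra_simps)
qed

lemma wrap_map_window_image: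
  assumes "k < K" "1 < k" "K dvd s0" "s0 \<in> {A..<A + k}"
    and g: "bij_betw g {..<k - 1} S" and "u \<notin> S"
  shows "wrap_map K (k - 1) u g s ` {A..<A + k} = insert u S"
proof -
  let ?P = "wrap_map K (k - 1) u g s"
  have gS: "g ((z - z div K + s) mod (k - 1)) \<in> S" for z
    using bij_betw_apply[OF g] assms(2) by simp
  have "inj_on ?P {A..<A + k}"
  proof (rule linorder_inj_onI')
    fix z z' assume z: "z \<in> {A..<A + k}" and z': "z' \<in> {A..<A + k}" and "z < z'"
    consider "K dvd z" "K dvd z'" | "K dvd z \<longleftrightarrow> \<not> K dvd z'" | "\<not> K dvd z" "\<not> K dvd z'" by blast
    then show "?P z \<noteq> ?P z'"
    proof cases
      case 1
      then show ?thesis using dvd_unique_in_window[OF _ _ _ z z'] assms(1) \<open>z < z'\<close> by fastforce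
    next
      case 2
      then show ?thesis using gS \<open>u \<notin> S\<close> unfolding wrap_map_def by force
    next
      case 3
      have "(z - z div K + s) mod (k - 1) \<noteq> (z' - z' div K + s) mod (k - 1)"
        using wrap_index_gap[OF assms(1,3,4) z z' 3 \<open>z < z'\<close>] by (intro mod_neq_if_close) auto
      moreover have "(z - z div K + s) mod (k - 1) < k - 1" "(z' - z' div K + s) mod (k - 1) < k - 1"
        using assms(2) by simp_all
      ultimately show ?thesis
        using 3 bij_betw_imp_inj_on[OF g] unfolding wrap_map_def inj_on_def by auto
    qed
  qed
  moreover have "?P ` {A..<A + k} \<subseteq> insert u S"
    using gS unfolding wrap_map_def by auto
  moreover have "finite S" "card S = k - 1"
    using bij_betw_finite[OF g] bij_betw_same_card[OF g] by auto
  ultimately show ?thesis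
    using assms(2,6) by (intro card_subset_eq) (auto simp: card_image)
qed

locale cycle_wrap =
  fixes k l a :: nat
  assumes l_less_k: "l < k"
    and wrap_lower: "(a - 1) * (k - l) < k"
    and wrap_upper: "k < a * (k - l)"
begin

lemma shift_bounds: "2 \<le> k - l" "k - l < k"
proof -
  have "2 \<le> a"
  proof (rule ccontr)
    assume "\<not> 2 \<le> a"
    then have "a * (k - l) \<le> k - l" using mult_le_mono1[of a 1 "k - l"] by (simp only: mult_1)
    then show False using wrap_upper by linarith
  qed
  then show "k - l < k"
    using wrap_lower le_less_trans[OF mult_le_mono1[of 1 "a - 1" "k - l"]] by simp
  show "2 \<le> k - l"
  proof (rule ccontr)
    assume "\<not> 2 \<le> k - l"
    then have "k - l = 1" using l_less_k by simp
    then show False using wrap_lower wrap_upper by simp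
  qed
qed

lemma k_ge_3: "3 \<le> k"
  using shift_bounds by simp

lemma window_contains_multiple:
  obtains c where "i * (k - l) \<le> a * (k - l) * c" "a * (k - l) * c < i * (k - l) + k"
proof -
  define m where "m = k - l"
  have a0: "0 < a" using wrap_upper by (cases a) auto
  define c where "c = (i + a - 1) div a"
  have "c * a \<le> i + (a - 1)" "i + a - 1 < a + c * a"
    unfolding c_def using a0 dividend_less_div_times[OF a0, of "i + a - 1"] by simp_all
  then have "i \<le> c * a" "c * a \<le> i + (a - 1)" using a0 by simp_all
  then have "i * m \<le> c * a * m" "c * a * m \<le> i * m + (a - 1) * m"
    by (simp_all only: mult_le_mono1 flip: add_mult_distrib)
  moreover have "a * m * c = c * a * m" by (simp only: mult_ac)
  ultimately have "i * m \<le> a * m * c" "a * m * c < i * m + k"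
    using wrap_lower unfolding m_def by linarith+
  then show ?thesis using that unfolding m_def by blast
qed

lemma cyc_nverts_wrap: "cyc_nverts k l (a * (k - 1)) = a * (k - l) * (k - 1)"
  by (simp add: cyc_nverts_def mult_ac)

lemma is_cycle_wrap: "is_cycle k l (a * (k - 1))"
proof (rule is_cycleI[OF l_less_k])
  have "k + (k - l) \<le> 2 * (k + 1)" by simp
  also have "\<dots> \<le> (k - 1) * (k + 1)" using k_ge_3 by (intro mult_le_mono1) simp
  also have "\<dots> \<le> (k - 1) * (a * (k - l))" using wrap_upper by (intro mult_le_mono2) simp
  finally show "k + (k - l) \<le> a * (k - 1) * (k - l)" by (simp add: mult_ac)
qed

lemma wrap_map_cyc_hom:
  assumes "insert u S \<in> E" "insert u S \<subseteq> V" "u \<notin> S" "bij_betw g {..<k - 1} S"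
  shows "cyc_hom k l (a * (k - 1)) V E
           (restrict (wrap_map (a * (k - l)) (k - 1) u g s) {..<a * (k - l) * (k - 1)})"
proof -
  let ?K = "a * (k - l)"
  let ?N = "a * (k - l) * (k - 1)"
  let ?P = "wrap_map ?K (k - 1) u g s"
  have K0: "0 < ?K" using wrap_upper by linarith
  then have N0: "0 < ?N" using k_ge_3 by simp
  have "restrict ?P {..<?N} ` cyc_edge k l (a * (k - 1)) i = insert u S" for i
  proof -
    obtain c where c: "i * (k - l) \<le> ?K * c" "?K * c < i * (k - l) + k"
      using window_contains_multiple .
    have "restrict ?P {..<?N} ` cyc_edge k l (a * (k - 1)) i = (\<lambda>j. ?P (i * (k - l) + j)) ` {..<k}"
      unfolding cyc_edge_eq_image cyc_nverts_wrap image_image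
      using N0 wrap_map_mod[OF K0] by (intro image_cong) auto
    also have "\<dots> = ?P ` {i * (k - l)..<i * (k - l) + k}"
      by (rule image_lessThan_shift)
    also have "\<dots> = insert u S"
      using c wrap_upper k_ge_3 assms(3,4) by (intro wrap_map_window_image[of _ _ "?K * c"]) auto
    finally show ?thesis .
  qed
  moreover have "?P z \<in> V" for z
    using assms(2) bij_betw_apply[OF assms(4)] k_ge_3 unfolding wrap_map_def by auto
  ultimately show ?thesis
    using assms(1) is_cycle_wrap unfolding cyc_hom_def cyc_edges_def cyc_nverts_wrap by auto
qed

lemma wrap_dual_inequality:
  fixes y :: "'a \<Rightarrow> real"
  assumes "insert u S \<in> E" "insert u S \<subseteq> V" "u \<notin> S" "card S = k - 1"
    and hom_nonneg: "\<And>\<phi>. cyc_hom k l (a * (k - 1)) V E \<phi> \<Longrightarrow> 0 \<le> (\<Sum>x<a * (k - l) * (k - 1). y (\<phi> x))"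
  shows "0 \<le> real (k - 1) * y u + (real (a * (k - l)) - 1) * (\<Sum>v\<in>S. y v)"
proof -
  let ?K = "a * (k - l)"
  have "finite S" using assms(4) k_ge_3 by (intro card_ge_0_finite) simp
  then obtain g where g: "bij_betw g {..<k - 1} S"
    using ex_bij_betw_nat_finite assms(4) by (metis atLeast0LessThan)
  have "0 \<le> (\<Sum>x<?K * (k - 1). y (wrap_map ?K (k - 1) u g s x))" for s
    using hom_nonneg[OF wrap_map_cyc_hom[OF assms(1-3) g, of s]] by simp
  then have "0 \<le> (\<Sum>s<k - 1. \<Sum>x<?K * (k - 1). y (wrap_map ?K (k - 1) u g s x))"
    by (simp add: sum_nonneg)
  also have "\<dots> = real (k - 1) * (real (k - 1) * y u + (real ?K - 1) * (\<Sum>v\<in>S. y v))"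
    by (rule sum_wrap_map_rotations[OF _ g]) (use wrap_upper in linarith)
  finally show ?thesis using k_ge_3 by (simp add: zero_le_mult_iff)
qed

lemma sum_nonneg_if_nonneg_on_homs:
  fixes y :: "'a \<Rightarrow> real"
  assumes kg: "kgraph k V E"
    and size: "card V \<le> a * (k - l) * \<tau>" "\<tau> + (k - 1) \<le> card V"
    and codeg: "\<And>S. S \<subseteq> V \<Longrightarrow> card S = k - 1 \<Longrightarrow> \<tau> < card {e\<in>E. S \<subseteq> e}"
    and hom_nonneg: "\<And>\<phi>. cyc_hom k l (a * (k - 1)) V E \<phi> \<Longrightarrow> 0 \<le> (\<Sum>x<a * (k - l) * (k - 1). y (\<phi> x))"
  shows "0 \<le> (\<Sum>v\<in>V. y v)"
proof -
  obtain T S u where T: "T \<subseteq> V" "card T = \<tau>" and top: "\<And>x z. x \<in> T \<Longrightarrow> z \<in> V - T \<Longrightarrow> y z \<le> y x"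
    and S: "S \<subseteq> V - T" "card S = k - 1" and bottom: "\<And>x z. x \<in> S \<Longrightarrow> z \<in> V - T - S \<Longrightarrow> y x \<le> y z"
    and u: "u \<in> V - T - S" "insert u S \<in> E"
    using exists_ranked_edge[OF kg _ size(2) codeg, of y] k_ge_3 by auto
  have fin: "finite V" "finite T" "finite S" "finite (V - T - S)"
    using kg T S unfolding kgraph_def by (auto intro: finite_subset)
  have "insert u S \<subseteq> V" using kg u(2) unfolding kgraph_def by blast
  then have dual: "0 \<le> real (k - 1) * y u + (real (a * (k - l)) - 1) * (\<Sum>v\<in>S. y v)"
    using u by (intro wrap_dual_inequality[OF u(2) _ _ S(2) hom_nonneg]) auto
  have "(\<Sum>v\<in>V. y v) = (\<Sum>v\<in>V - T. y v) + (\<Sum>v\<in>T. y v)"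
    by (rule sum.subset_diff[OF T(1) fin(1)])
  moreover have "(\<Sum>v\<in>V - T. y v) = (\<Sum>v\<in>V - T - S. y v) + (\<Sum>v\<in>S. y v)"
    using fin by (intro sum.subset_diff[OF S(1)]) auto
  ultimately have split: "(\<Sum>v\<in>V. y v) = (\<Sum>v\<in>T. y v) + (\<Sum>v\<in>V - T - S. y v) + (\<Sum>v\<in>S. y v)"
    by simp
  have T_bound: "real \<tau> * y u \<le> (\<Sum>v\<in>T. y v)"
    using sum_mono[of T "\<lambda>_. y u" y] top u(1) T(2) by auto
  have S_le: "(\<Sum>v\<in>S. y v) \<le> real (k - 1) * y w" if "w \<in> V - T - S" for w
    using sum_mono[of S y "\<lambda>_. y w"] bottom[OF _ that] S(2) by auto
  have "(\<Sum>w\<in>V - T - S. (\<Sum>v\<in>S. y v)) \<le> (\<Sum>w\<in>V - T - S. real (k - 1) * y w)"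
    by (rule sum_mono) (rule S_le)
  moreover have "real (card (V - T - S)) = real (card V) - real \<tau> - real (k - 1)"
    using fin T S size(2) by (simp add: card_Diff_subset)
  ultimately have R_bound: "(real (card V) - real \<tau> - real (k - 1)) * (\<Sum>v\<in>S. y v)
      \<le> real (k - 1) * (\<Sum>v\<in>V - T - S. y v)"
    by (simp add: sum_distrib_left)
  have "real (card V) \<le> real (a * (k - l)) * real \<tau>"
    using size(1) by (simp flip: of_nat_mult)
  then show ?thesis
    unfolding split using T_bound R_bound S_le[OF u(1)] size(2) dual k_ge_3 l_less_k
    by (intro layered_sum_nonneg[where \<kappa> = "real (k - 1)" and K = "real (a * (k - l))"
          and \<tau> = "real \<tau>" and n = "real (card V)" and Y = "y u"]) auto
qed

lemma perfect_frac_cycle_tiling_if_codegree: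
  assumes kg: "kgraph k V E"
    and size: "card V \<le> a * (k - l) * \<tau>" "\<tau> + (k - 1) \<le> card V"
    and codeg: "\<And>S. S \<subseteq> V \<Longrightarrow> card S = k - 1 \<Longrightarrow> \<tau> < card {e\<in>E. S \<subseteq> e}"
  shows "perfect_frac_cycle_tiling k l V E"
proof -
  let ?t = "a * (k - 1)"
  let ?H = "{\<phi>. cyc_hom k l ?t V E \<phi>}"
  let ?A = "\<lambda>\<phi> v. real (card {x\<in>{..<cyc_nverts k l ?t}. \<phi> x = v})"
  have "finite V" using kg by (simp add: kgraph_def)
  have "\<not> farkas_certificate V ?H ?A (\<lambda>_. 1) y" for y
  proof
    assume cert: "farkas_certificate V ?H ?A (\<lambda>_. 1) y"
    have "dot_on V y (?A \<phi>) = (\<Sum>x<a * (k - l) * (k - 1). y (\<phi> x))" if "\<phi> \<in> ?H" for \<phi>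
    proof -
      have "\<phi> ` {..<a * (k - l) * (k - 1)} \<subseteq> V"
        using that unfolding mem_Collect_eq cyc_hom_def cyc_nverts_wrap by auto
      then show ?thesis
        unfolding dot_on_def cyc_nverts_wrap using sum_fibres[OF \<open>finite V\<close> finite_lessThan] by simp
    qed
    then have "0 \<le> (\<Sum>v\<in>V. y v)"
      using cert unfolding farkas_certificate_def
      by (intro sum_nonneg_if_nonneg_on_homs[OF kg size codeg]) auto
    then show False using cert by (simp add: farkas_certificate_def dot_on_def)
  qed
  then have "in_cone V ?H ?A (\<lambda>_. 1)"
    using farkas_lemma[OF \<open>finite V\<close> finite_cyc_homs[OF \<open>finite V\<close>]] by blast
  moreover have "0 < cyc_nverts k l ?t"
  proof -
    have "0 < a * (k - l)" using wrap_upper by linarith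
    then show ?thesis unfolding cyc_nverts_wrap using k_ge_3 by simp
  qed
  ultimately show ?thesis by (intro perfect_frac_cycle_tilingI \<open>finite V\<close>)
qed

lemma perfect_frac_cycle_tiling_if_min_codegree:
  assumes "0 < \<epsilon>"
  shows "\<exists>n0. \<forall>n\<ge>n0. \<forall>E :: nat set set. kgraph k {..<n} E \<and>
    real (min_deg (k - 1) {..<n} E) \<ge> (1 / real (a * (k - l)) + \<epsilon>) * real ((n - (k - 1)) choose (k - (k - 1)))
    \<longrightarrow> perfect_frac_cycle_tiling k l {..<n} E"
proof (intro exI[of _ "nat \<lceil>2 / \<epsilon>\<rceil> + 2 * k"] allI impI, elim conjE)
  fix n and E :: "nat set set"
  define K where "K = a * (k - l)"
  assume n: "nat \<lceil>2 / \<epsilon>\<rceil> + 2 * k \<le> n" and kg: "kgraph k {..<n} E"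
    and "real (min_deg (k - 1) {..<n} E) \<ge> (1 / real (a * (k - l)) + \<epsilon>) * real ((n - (k - 1)) choose (k - (k - 1)))"
  then have deg: "(1 / real K + \<epsilon>) * real (n - (k - 1)) \<le> real (min_deg (k - 1) {..<n} E)"
    using k_ge_3 unfolding K_def by simp
  define \<tau> where "\<tau> = n div K + 1"
  have K: "k < K" "4 \<le> K" using wrap_upper k_ge_3 unfolding K_def by simp_all
  then have "n < K * \<tau>" unfolding \<tau>_def using dividend_less_times_div[of K n] by simp
  moreover have "\<tau> + (k - 1) \<le> n"
  proof -
    have "4 * (n div K) \<le> K * (n div K)" using K by (intro mult_le_mono1) simp
    also have "\<dots> \<le> n" by simp
    finally show ?thesis unfolding \<tau>_def using n k_ge_3 by linarith
  qed
  moreover have "\<tau> < card {e\<in>E. S \<subseteq> e}" if "S \<subseteq> {..<n}" "card S = k - 1" for S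
  proof -
    have "real \<tau> < (1 / real K + \<epsilon>) * real (n - (k - 1))"
      unfolding \<tau>_def by (rule div_add_one_less_scaled[OF \<open>0 < \<epsilon>\<close> K(1) n])
    also have "\<dots> \<le> real (min_deg (k - 1) {..<n} E)"
      by (rule deg)
    also have "\<dots> \<le> real (card {e\<in>E. S \<subseteq> e})"
      using min_deg_le_codegree[OF _ that] by simp
    finally show ?thesis by simp
  qed
  ultimately show "perfect_frac_cycle_tiling k l {..<n} E"
    unfolding K_def by (intro perfect_frac_cycle_tiling_if_codegree[OF kg, of \<tau>]) simp_all
qed

end

theorem corollary3p8:
  fixes k l :: nat
  assumes "1 \<le> l" and "l \<le> k - 2" and "\<not> (k - l) dvd k"
  shows "frct_threshold (k - 1) k l \<le> lambda_kl k l"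
proof -
  define a where "a = k div (k - l) + 1"
  have "l < k" using assms(1,2) by simp
  have mod: "0 < k mod (k - l)" "k mod (k - l) < k - l"
    using assms(3) \<open>l < k\<close> by (simp_all add: dvd_eq_mod_eq_0)
  interpret cycle_wrap k l a
  proof
    show "l < k" by fact
    show "(a - 1) * (k - l) < k" "k < a * (k - l)"
      using div_mult_mod_eq[of k "k - l"] mod unfolding a_def by simp_all
  qed
  have "\<lceil>real k / real (k - l)\<rceil> = int a"
    unfolding a_def using ceiling_of_nat_divide[OF _ assms(3)] \<open>l < k\<close> by simp
  then have "lambda_kl k l = 1 / real (a * (k - l))"
    unfolding lambda_kl_def by simp
  moreover have "1 / real (a * (k - l)) \<le> 1"
  proof -
    have "1 \<le> a * (k - l)" using wrap_upper by linarith
    then show ?thesis using inverse_of_nat_le[of 1 "a * (k - l)", where 'a = real] by simp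
  qed
  ultimately show ?thesis
    using perfect_frac_cycle_tiling_if_min_codegree by (intro frct_threshold_le) auto
qed

end
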